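(* Let $(g;\Gamma)$ be a solution of the $(1,2)$-AlgDOP problem over $\mathbb{C}$ which cannot be reduced to a solution of the $(1,1)$-AlgDOP problem by a $(1,2)$-admissible change of variables, and suppose $\Gamma=y(y-p_1(x))(y-p_2(x))$ for polynomials $p_1,p_2$. Then the polynomial $p_1p_2$ has at most two distinct complex roots.
   Context: For positive reals $\mathbf w=(w_1,\dots,w_d)$, $\deg_{\mathbf w}(\sum_k a_kx^k)=\max_{a_k\ne0}\sum_i w_ik_i$, and $\mathcal P_{\mathbf w}(n;\mathbb K)$ denotes polynomials over $\mathbb K$ of $\mathbf w$-degree $\le n$. A solution of the $\mathbf w$-AlgDOP problem over $\mathbb K$ is a pair $(g,\Gamma)$, $g=(g^{ij})$ a symmetric matrix of polynomials, $\Gamma$ a polynomial, with (A1) $g^{ij}\in\mathcal P_{\mathbf w}(w_i+w_j;\mathbb K)$; (A2) $\det g\not\equiv0$ and $\Gamma$ is a square-free factor of $\det g$; (A3) $\Gamma$ divides $\sum_j g^{ij}\partial_j\Gamma$ for each $i$. In dimension 2: variables $(x,y)$, $\mathbf w=(1,w)$. A $(1,2)$-admissible change of variables is $\Phi:(x,y)\mapsto(\alpha x+\beta,\gamma y+p(x))$ with $\alpha\gamma\ne0$, $\deg p\le2$; it maps $(g,\Gamma)$ to $(\Phi_*g,\Gamma\circ\Phi^{-1})$, $\Phi_*g$ the pushforward as a contravariant 2-tensor. *)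

theory Defs
  imports Complex_Main "HOL-Computational_Algebra.Polynomial" "HOL-Computational_Algebra.Squarefree"
begin

text \<open>Bivariate polynomials in (x,y) over the complex numbers are represented as
  polynomials in the outer variable y whose coefficients are polynomials in x:
  f = sum_j (coeff f j)(x) * y^j.\<close>

type_synonym bpoly = "complex poly poly"

definition Dx :: "bpoly \<Rightarrow> bpoly" where
  "Dx f = map_poly pderiv f"

definition Dy :: "bpoly \<Rightarrow> bpoly" where
  "Dy f = pderiv f"

definition in_Pw :: "nat \<Rightarrow> nat \<Rightarrow> bpoly \<Rightarrow> bool" where
  "in_Pw w n f \<longleftrightarrow>
     (\<forall>i j. coeff (coeff f j) i \<noteq> 0 \<longrightarrow> i + w * j \<le> n)"

text \<open>Solution of the (1,w)-AlgDOP problem over C. The symmetric matrix g is given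
  by its entries g^{11} = a, g^{12} = g^{21} = b, g^{22} = c.\<close>

definition algdop :: "nat \<Rightarrow> bpoly \<Rightarrow> bpoly \<Rightarrow> bpoly \<Rightarrow> bpoly \<Rightarrow> bool" where
  "algdop w a b c \<Gamma> \<longleftrightarrow>
     in_Pw w 2 a \<and> in_Pw w (1 + w) b \<and> in_Pw w (2 * w) c \<and>
     a * c - b * b \<noteq> 0 \<and> squarefree \<Gamma> \<and> \<Gamma> dvd (a * c - b * b) \<and>
     \<Gamma> dvd (a * Dx \<Gamma> + b * Dy \<Gamma>) \<and> \<Gamma> dvd (b * Dx \<Gamma> + c * Dy \<Gamma>)"

text \<open>Composition f(A(x), B(x,y)) with A univariate in x and B bivariate.\<close>

definition bcomp :: "bpoly \<Rightarrow> complex poly \<Rightarrow> bpoly \<Rightarrow> bpoly" where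
  "bcomp f A B = pcompose (map_poly (\<lambda>q. pcompose q A) f) B"

text \<open>The inverse of Phi(x,y) = (alpha x + beta, gamma y + p(x)) is
  (u,v) |-> ((u - beta)/alpha, (v - p((u - beta)/alpha))/gamma).\<close>

definition inv_x :: "complex \<Rightarrow> complex \<Rightarrow> complex poly" where
  "inv_x \<alpha> \<beta> = [:- \<beta> / \<alpha>, 1 / \<alpha>:]"

definition inv_y :: "complex \<Rightarrow> complex \<Rightarrow> complex \<Rightarrow> complex poly \<Rightarrow> bpoly" where
  "inv_y \<alpha> \<beta> \<gamma> p = [: smult (- 1 / \<gamma>) (pcompose p (inv_x \<alpha> \<beta>)), [: 1 / \<gamma> :] :]"

definition comp_inv :: "complex \<Rightarrow> complex \<Rightarrow> complex \<Rightarrow> complex poly \<Rightarrow> bpoly \<Rightarrow> bpoly" where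
  "comp_inv \<alpha> \<beta> \<gamma> p f = bcomp f (inv_x \<alpha> \<beta>) (inv_y \<alpha> \<beta> \<gamma> p)"

definition admissible12 :: "complex \<Rightarrow> complex \<Rightarrow> complex \<Rightarrow> complex poly \<Rightarrow> bool" where
  "admissible12 \<alpha> \<beta> \<gamma> p \<longleftrightarrow> \<alpha> * \<gamma> \<noteq> 0 \<and> degree p \<le> 2"

text \<open>Pushforward of the contravariant 2-tensor g under Phi: with Jacobian
  J = [[alpha, 0], [p'(x), gamma]], Phi_* g = (J g J^T) o Phi^{-1}.\<close>

definition push_a :: "complex \<Rightarrow> complex \<Rightarrow> complex \<Rightarrow> complex poly \<Rightarrow> bpoly \<Rightarrow> bpoly \<Rightarrow> bpoly \<Rightarrow> bpoly" where
  "push_a \<alpha> \<beta> \<gamma> p a b c = comp_inv \<alpha> \<beta> \<gamma> p (smult [:\<alpha>^2:] a)"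

definition push_b :: "complex \<Rightarrow> complex \<Rightarrow> complex \<Rightarrow> complex poly \<Rightarrow> bpoly \<Rightarrow> bpoly \<Rightarrow> bpoly \<Rightarrow> bpoly" where
  "push_b \<alpha> \<beta> \<gamma> p a b c =
     comp_inv \<alpha> \<beta> \<gamma> p (smult [:\<alpha>:] ([:pderiv p:] * a + smult [:\<gamma>:] b))"

definition push_c :: "complex \<Rightarrow> complex \<Rightarrow> complex \<Rightarrow> complex poly \<Rightarrow> bpoly \<Rightarrow> bpoly \<Rightarrow> bpoly \<Rightarrow> bpoly" where
  "push_c \<alpha> \<beta> \<gamma> p a b c =
     comp_inv \<alpha> \<beta> \<gamma> p ([:pderiv p:]^2 * a + smult [:2 * \<gamma>:] ([:pderiv p:] * b)
                        + smult [:\<gamma>^2:] c)"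

definition reducible_to_11 :: "bpoly \<Rightarrow> bpoly \<Rightarrow> bpoly \<Rightarrow> bpoly \<Rightarrow> bool" where
  "reducible_to_11 a b c \<Gamma> \<longleftrightarrow>
     (\<exists>\<alpha> \<beta> \<gamma> p. admissible12 \<alpha> \<beta> \<gamma> p \<and>
        algdop 1 (push_a \<alpha> \<beta> \<gamma> p a b c) (push_b \<alpha> \<beta> \<gamma> p a b c) (push_c \<alpha> \<beta> \<gamma> p a b c)
                 (comp_inv \<alpha> \<beta> \<gamma> p \<Gamma>))"

end

theory Submission
  imports Defs
begin

text \<open>The weight bounds force \<open>a = A + a\<^sub>3 y\<close>, \<open>b = B + L y\<close>, \<open>c = C + Q y + c\<^sub>2 y\<^sup>2\<close> with
  \<open>deg A, deg Q \<le> 2\<close> and \<open>deg L \<le> 1\<close>. Evaluating the tangency conditions on the three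
  branches \<open>y = 0, p\<^sub>1, p\<^sub>2\<close> of \<open>\<Gamma>\<close> gives \<open>B = C = 0\<close> and polynomial identities in \<open>x\<close>;
  since \<open>det g\<close> has \<open>y\<close>-degree 3 like \<open>\<Gamma>\<close>, it is a constant multiple \<open>a\<^sub>3 c\<^sub>2 \<Gamma>\<close>, which
  fixes \<open>p\<^sub>1 p\<^sub>2\<close> and \<open>p\<^sub>1 + p\<^sub>2\<close> in terms of \<open>A, L, Q\<close>. Hence each \<open>p\<^sub>i\<close> is at most
  quadratic, and a quadratic \<open>p\<^sub>i\<close> with two distinct roots contradicts these identities at the
  midpoint of its roots. So each \<open>p\<^sub>i\<close> has at most one root.\<close>

lemma in_Pw_coeff_eq_0: "in_Pw w n f \<Longrightarrow> n < i + w * j \<Longrightarrow> coeff (coeff f j) i = 0"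
  unfolding in_Pw_def by (meson not_le)

lemma in_Pw_coeff_eq_0_row: "in_Pw w n f \<Longrightarrow> n < w * j \<Longrightarrow> coeff f j = 0"
  by (rule poly_eqI) (simp add: in_Pw_coeff_eq_0)

lemma in_Pw_degree_coeff: "in_Pw w n f \<Longrightarrow> degree (coeff f j) \<le> n - w * j"
  by (rule degree_le) (auto simp: in_Pw_coeff_eq_0)

lemma in_Pw_2_2E:
  assumes "in_Pw 2 2 a"
  obtains A a3 where "a = [:A, [:a3:]:]" and "degree A \<le> 2"
proof
  have "degree (coeff a 1) = 0"
    using in_Pw_degree_coeff[OF assms, of 1] by simp
  then have "coeff a 1 = [:coeff (coeff a 1) 0:]"
    by (simp add: degree_0_id)
  then show "a = [:coeff a 0, [:coeff (coeff a 1) 0:]:]"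
    using in_Pw_coeff_eq_0_row[OF assms]
    by (intro poly_eqI) (auto simp: coeff_pCons split: nat.split)
  show "degree (coeff a 0) \<le> 2"
    using in_Pw_degree_coeff[OF assms, of 0] by simp
qed

lemma in_Pw_2_3E:
  assumes "in_Pw 2 3 b"
  obtains B L where "b = [:B, L:]" and "degree L \<le> 1"
proof
  show "b = [:coeff b 0, coeff b 1:]"
    using in_Pw_coeff_eq_0_row[OF assms]
    by (intro poly_eqI) (auto simp: coeff_pCons split: nat.split)
  show "degree (coeff b 1) \<le> 1"
    using in_Pw_degree_coeff[OF assms, of 1] by simp
qed

lemma in_Pw_2_4E:
  assumes "in_Pw 2 4 c"
  obtains C Q c2 where "c = [:C, Q, [:c2:]:]" and "degree Q \<le> 2"
proof
  have "degree (coeff c 2) = 0"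
    using in_Pw_degree_coeff[OF assms, of 2] by simp
  then have "coeff c 2 = [:coeff (coeff c 2) 0:]"
    by (simp add: degree_0_id)
  then show "c = [:coeff c 0, coeff c 1, [:coeff (coeff c 2) 0:]:]"
    using in_Pw_coeff_eq_0_row[OF assms]
    by (intro poly_eqI) (auto simp: coeff_pCons numeral_2_eq_2 split: nat.split)
  show "degree (coeff c 1) \<le> 2"
    using in_Pw_degree_coeff[OF assms, of 1] by simp
qed

lemma not_squarefree_linear_square:
  fixes r :: "'a::idom"
  shows "\<not> squarefree ([:r, 1:] * [:r, 1:] * s)"
proof (rule not_squarefreeI[of "[:r, 1:]"])
  show "[:r, 1:] ^ 2 dvd [:r, 1:] * [:r, 1:] * s"
    by (simp only: power2_eq_square dvd_triv_left)
  show "\<not> [:r, 1:] dvd 1"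
    using dvd_imp_degree_le[of "[:r, 1:]" 1] by auto
qed

lemma squarefree_cubic_distinct_roots:
  fixes p1 p2 :: "'a::idom"
  assumes "squarefree ([:0, 1:] * [:-p1, 1:] * [:-p2, 1:])"
  shows "p1 \<noteq> 0" and "p2 \<noteq> 0" and "p1 \<noteq> p2"
  using assms not_squarefree_linear_square[of 0 "[:-p2, 1:]"]
    not_squarefree_linear_square[of 0 "[:-p1, 1:]"] not_squarefree_linear_square[of "-p1" "[:0, 1:]"]
  by (auto simp: ac_simps)

lemma cubic_linear_factors:
  fixes p1 p2 :: "'a::comm_ring_1"
  shows "[:0, 1:] * [:-p1, 1:] * [:-p2, 1:] = [:0, p1 * p2, -(p1 + p2), 1:]"
  by (simp add: algebra_simps)

lemma cubic_linear_factor_dvd: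
  fixes p1 p2 :: "'a::comm_ring_1"
  shows "[:0, 1:] dvd [:0, p1 * p2, -(p1 + p2), 1:]" and "[:-p1, 1:] dvd [:0, p1 * p2, -(p1 + p2), 1:]"
  unfolding cubic_linear_factors[symmetric]
  by (rule dvd_mult2[OF dvd_mult2[OF dvd_refl]] dvd_mult2[OF dvd_mult[OF dvd_refl]])+

lemma tangency_cubic_at_0:
  fixes p1 p2 :: "complex poly" and f g :: bpoly
  defines "\<Gamma> \<equiv> [:0, p1 * p2, -(p1 + p2), 1:]"
  assumes "\<Gamma> dvd f * Dx \<Gamma> + g * Dy \<Gamma>" and "p1 * p2 \<noteq> 0"
  shows "coeff g 0 = 0"
proof -
  have "poly (f * Dx \<Gamma> + g * Dy \<Gamma>) 0 = 0"
    using dvd_trans[OF cubic_linear_factor_dvd(1) assms(2)[unfolded \<Gamma>_def]]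
    by (simp only: \<Gamma>_def poly_eq_0_iff_dvd minus_zero)
  with assms(3) show ?thesis
    by (simp add: \<Gamma>_def Dx_def Dy_def map_poly_pCons pderiv_pCons poly_0_coeff_0)
qed

lemma tangency_cubic_at_root:
  fixes p1 p2 :: "complex poly" and f g :: bpoly
  defines "\<Gamma> \<equiv> [:0, p1 * p2, -(p1 + p2), 1:]"
  assumes "\<Gamma> dvd f * Dx \<Gamma> + g * Dy \<Gamma>" and "p1 \<noteq> 0" and "p1 \<noteq> p2"
  shows "poly g p1 = poly f p1 * pderiv p1"
proof -
  have "poly (f * Dx \<Gamma> + g * Dy \<Gamma>) p1 = 0"
    using dvd_trans[OF cubic_linear_factor_dvd(2) assms(2)[unfolded \<Gamma>_def]]
    by (simp only: \<Gamma>_def poly_eq_0_iff_dvd minus_zero)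
  then have "p1 * (p1 - p2) * (poly g p1 - poly f p1 * pderiv p1) = 0"
    by (simp add: \<Gamma>_def Dx_def Dy_def map_poly_pCons pderiv_mult pderiv_pCons pderiv_add
        pderiv_diff pderiv_minus algebra_simps power2_eq_square)
  with assms(3,4) show ?thesis by simp
qed

lemma dvd_monic_same_degree:
  fixes G D :: "'a::idom poly"
  assumes "G dvd D" "D \<noteq> 0" "degree D \<le> degree G" "lead_coeff G = 1"
  shows "D = smult (coeff D (degree G)) G"
proof -
  obtain h where h: "D = G * h" using assms(1) by (elim dvdE)
  with assms(2) have "G \<noteq> 0" "h \<noteq> 0" by auto
  with h assms(3) have "degree h = 0" by (simp add: degree_mult_eq)
  then obtain \<kappa> where "h = [:\<kappa>:]" by (rule degree_eq_zeroE)
  with h assms(4) show ?thesis by simp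
qed

lemma degree_le_2_of_sum_and_product:
  fixes p q :: "'a::idom poly"
  assumes "p \<noteq> 0" "q \<noteq> 0" "degree (p * q) \<le> 4" "degree (p + q) \<le> 2"
  shows "degree p \<le> 2"
proof (rule ccontr)
  assume "\<not> degree p \<le> 2"
  moreover have "degree p + degree q \<le> 4"
    using assms(3) degree_mult_eq[OF assms(1,2)] by simp
  ultimately have "degree (p + q) = degree p"
    by (intro degree_add_eq_left) simp
  with assms(4) \<open>\<not> degree p \<le> 2\<close> show False by simp
qed

lemma degree_le_2_two_roots_eq:
  fixes p :: "'a::idom poly"
  assumes "degree p \<le> 2" "poly p r = 0" "poly p s = 0" "r \<noteq> s"
  shows "p = smult (coeff p 2) ([:-r, 1:] * [:-s, 1:])"
proof (cases "p = 0")
  case False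
  obtain q where q: "p = [:-r, 1:] * q"
    using assms(2) by (auto simp: poly_eq_0_iff_dvd)
  with assms(3,4) have "poly q s = 0" by simp
  then obtain k where k: "q = [:-s, 1:] * k"
    by (auto simp: poly_eq_0_iff_dvd)
  with q False have "k \<noteq> 0" by auto
  with q k assms(1) have "degree k = 0"
    by (simp add: degree_mult_eq del: mult_pCons_left)
  then obtain \<kappa> where "k = [:\<kappa>:]" by (rule degree_eq_zeroE)
  with q k have "p = smult \<kappa> ([:-r, 1:] * [:-s, 1:])"
    by (simp add: algebra_simps)
  then show ?thesis
    by (simp add: numeral_2_eq_2)
qed simp

lemma cubic_multiple_coeffs:
  fixes p1 p2 A L Q :: "'a::idom poly"
  assumes "[:0, p1 * p2, -(p1 + p2), 1:] dvd D" and "D \<noteq> 0"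
    and "D = [:0, A * Q, smult c2 A + smult a3 Q - L * L, [:a3 * c2:]:]"
  shows "A * Q = smult (a3 * c2) (p1 * p2)"
    and "smult c2 A + smult a3 Q - L * L = - smult (a3 * c2) (p1 + p2)"
    and "a3 * c2 \<noteq> 0"
proof -
  have "D = smult (coeff D (degree [:0, p1 * p2, -(p1 + p2), 1:])) [:0, p1 * p2, -(p1 + p2), 1:]"
    by (rule dvd_monic_same_degree) (use assms in \<open>auto simp: degree_pCons_le\<close>)
  then have "D = smult [:a3 * c2:] [:0, p1 * p2, -(p1 + p2), 1:]"
    by (simp add: assms(3) numeral_3_eq_3)
  with assms(2,3) show "A * Q = smult (a3 * c2) (p1 * p2)"
    and "smult c2 A + smult a3 Q - L * L = - smult (a3 * c2) (p1 + p2)"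
    and "a3 * c2 \<noteq> 0"
    by (auto simp: smult_diff_right smult_add_right)
qed

text \<open>\<open>A, L, Q, a\<^sub>3, c\<^sub>2\<close> are the coefficients of \<open>a = A + a\<^sub>3 y\<close>, \<open>b = L y\<close>,
  \<open>c = Q y + c\<^sub>2 y\<^sup>2\<close>. The tangency assumptions are the conditions on the branches \<open>y = p\<^sub>1\<close>
  and \<open>y = p\<^sub>2\<close>; the \<open>det_coeff\<close> assumptions compare the \<open>y\<close>- and \<open>y\<^sup>2\<close>-coefficients of
  \<open>a c - b\<^sup>2 = a\<^sub>3 c\<^sub>2 \<Gamma>\<close>.\<close>

locale tangency_system =
  fixes A L Q p1 p2 :: "'a::field_char_0 poly" and a3 c2 :: 'a
  assumes degree_A: "degree A \<le> 2" and degree_L: "degree L \<le> 1" and degree_Q: "degree Q \<le> 2"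
    and p1_nonzero: "p1 \<noteq> 0" and p2_nonzero: "p2 \<noteq> 0" and p1_neq_p2: "p1 \<noteq> p2"
    and a3_c2_nonzero: "a3 * c2 \<noteq> 0"
    and tangency_x: "L * p1 = (A + [:a3:] * p1) * pderiv p1"
    and tangency_y1: "Q + smult c2 p1 = L * pderiv p1"
    and tangency_y2: "Q + smult c2 p2 = L * pderiv p2"
    and det_coeff_1: "A * Q = smult (a3 * c2) (p1 * p2)"
    and det_coeff_2: "smult c2 A + smult a3 Q - L * L = - smult (a3 * c2) (p1 + p2)"
begin

lemma degree_p1_le_2: "degree p1 \<le> 2"
proof (rule degree_le_2_of_sum_and_product[OF p1_nonzero p2_nonzero])
  have "degree (A * Q) \<le> 4"
    using degree_mult_le[of A Q] degree_A degree_Q by simp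
  then show "degree (p1 * p2) \<le> 4"
    using det_coeff_1 a3_c2_nonzero by simp
  have "degree (smult c2 A + smult a3 Q - L * L) \<le> 2"
    using degree_A degree_Q degree_L degree_mult_le[of L L]
    by (intro degree_diff_le degree_add_le) (auto intro: order.trans[OF degree_smult_le])
  then show "degree (p1 + p2) \<le> 2"
    using det_coeff_2 a3_c2_nonzero by simp
qed

lemma no_two_roots:
  assumes r: "poly p1 r = 0" and s: "poly p1 s = 0" and "r \<noteq> s"
  shows False
proof -
  txt \<open>Both \<open>A\<close> and \<open>L\<close> become multiples of \<open>p\<^sub>1\<close> and \<open>p\<^sub>1'\<close>; at the midpoint of
    \<open>r, s\<close>, where \<open>p\<^sub>1'\<close> vanishes, the remaining identities force \<open>p\<^sub>1\<close> to vanish too.\<close>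
  define u where "u = coeff p1 2"
  have p1_eq: "p1 = smult u ([:-r, 1:] * [:-s, 1:])"
    unfolding u_def by (rule degree_le_2_two_roots_eq[OF degree_p1_le_2 assms])
  with p1_nonzero have "u \<noteq> 0" by auto
  have dp1: "pderiv p1 = smult u [:-(r + s), 2:]"
    by (simp add: p1_eq pderiv_smult pderiv_mult pderiv_pCons algebra_simps)
  have A_root: "poly A t = 0" if "poly p1 t = 0" "poly (pderiv p1) t \<noteq> 0" for t
    using arg_cong[OF tangency_x, of "\<lambda>f. poly f t"] that by simp
  have "poly (pderiv p1) r = u * (r - s)" "poly (pderiv p1) s = u * (s - r)"
    by (simp_all add: dp1 algebra_simps)
  with \<open>u \<noteq> 0\<close> \<open>r \<noteq> s\<close> have "poly A r = 0" "poly A s = 0"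
    using A_root r s by auto
  define \<mu> where "\<mu> = coeff A 2 / u"
  have A_eq: "A = smult \<mu> p1"
    using degree_le_2_two_roots_eq[OF degree_A \<open>poly A r = 0\<close> \<open>poly A s = 0\<close> \<open>r \<noteq> s\<close>]
      \<open>u \<noteq> 0\<close> by (simp add: p1_eq \<mu>_def)
  define \<nu> where "\<nu> = \<mu> + a3"
  have "p1 * L = p1 * smult \<nu> (pderiv p1)"
    using tangency_x by (simp add: A_eq \<nu>_def algebra_simps smult_add_left)
  then have L_eq: "L = smult \<nu> (pderiv p1)"
    using p1_nonzero by (metis mult_left_cancel mult_smult_right)
  have "\<nu> \<noteq> 0"
  proof
    assume "\<nu> = 0"
    then have "smult c2 p1 = smult c2 p2"
      using tangency_y1 tangency_y2 L_eq by (metis add_left_cancel mult_zero_left smult_0_left)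
    with a3_c2_nonzero p1_neq_p2 show False by (auto dest: smult_cancel)
  qed
  have "p1 * smult \<mu> Q = p1 * smult (a3 * c2) p2"
    using det_coeff_1 by (simp add: A_eq algebra_simps)
  then have Q_eq: "smult \<mu> Q = smult (a3 * c2) p2"
    using p1_nonzero by (metis mult_left_cancel mult_smult_right)
  define x0 where "x0 = (r + s) / 2"
  have "poly L x0 = 0"
    by (simp add: L_eq dp1 x0_def algebra_simps)
  then have Q1: "poly Q x0 + c2 * poly p1 x0 = 0" and Q2: "poly Q x0 + c2 * poly p2 x0 = 0"
    using arg_cong[OF tangency_y1, of "\<lambda>f. poly f x0"] arg_cong[OF tangency_y2, of "\<lambda>f. poly f x0"]
    by simp_all
  have "\<mu> * poly Q x0 = a3 * c2 * poly p2 x0"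
    using arg_cong[OF Q_eq, of "\<lambda>f. poly f x0"] by simp
  have "\<nu> * poly Q x0 = \<mu> * poly Q x0 + a3 * (poly Q x0 + c2 * poly p2 x0) - a3 * c2 * poly p2 x0"
    by (simp add: \<nu>_def algebra_simps)
  also have "\<dots> = 0"
    using Q2 \<open>\<mu> * poly Q x0 = a3 * c2 * poly p2 x0\<close> by simp
  finally have "\<nu> * poly Q x0 = 0" .
  with \<open>\<nu> \<noteq> 0\<close> a3_c2_nonzero Q1 have "poly p1 x0 = 0"
    by simp
  moreover have "poly p1 x0 = - u * ((r - s) / 2) ^ 2"
    by (simp add: p1_eq x0_def field_simps power2_eq_square)
  ultimately show False
    using \<open>u \<noteq> 0\<close> \<open>r \<noteq> s\<close> by simp
qed

theorem card_roots_p1_le_1: "card {z. poly p1 z = 0} \<le> 1"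
  using poly_roots_finite[OF p1_nonzero] no_two_roots
  by (auto simp: card_le_Suc0_iff_eq)

end

lemma algdop_2_cubic_tangency_system:
  fixes a b c :: bpoly and p1 p2 :: "complex poly"
  assumes "algdop 2 a b c [:0, p1 * p2, -(p1 + p2), 1:]"
  obtains A L Q a3 c2
  where "tangency_system A L Q p1 p2 a3 c2" and "tangency_system A L Q p2 p1 a3 c2"
proof -
  let ?\<Gamma> = "[:0, p1 * p2, -(p1 + p2), 1:]"
  have \<Gamma>_swap: "?\<Gamma> = [:0, p2 * p1, -(p2 + p1), 1:]"
    by (simp add: ac_simps)
  note alg = assms[unfolded algdop_def]
  obtain A a3 where a: "a = [:A, [:a3:]:]" and "degree A \<le> 2"
    using alg in_Pw_2_2E by blast
  obtain B L where b: "b = [:B, L:]" and "degree L \<le> 1"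
    using alg in_Pw_2_3E[of b] by (auto simp: numeral_3_eq_3)
  obtain C Q c2 where c: "c = [:C, Q, [:c2:]:]" and "degree Q \<le> 2"
    using alg in_Pw_2_4E[of c] by auto
  have "squarefree ([:0, 1:] * [:-p1, 1:] * [:-p2, 1:])"
    using alg by (simp only: cubic_linear_factors)
  note distinct = squarefree_cubic_distinct_roots[OF this]
  have "B = 0" "C = 0"
    using tangency_cubic_at_0[of p1 p2 a b] tangency_cubic_at_0[of p1 p2 b c] alg distinct
    by (simp_all add: b c)
  have tangency_x: "L * q = (A + [:a3:] * q) * pderiv q"
    if "poly b q = poly a q * pderiv q" for q
    using that by (simp add: a b \<open>B = 0\<close> algebra_simps)
  have tangency_y: "Q + smult c2 q = L * pderiv q"
    if "poly c q = poly b q * pderiv q" "q \<noteq> 0" for q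
  proof -
    have "q * (Q + smult c2 q) = q * (L * pderiv q)"
      using that(1) by (simp add: b c \<open>B = 0\<close> \<open>C = 0\<close> algebra_simps)
    with that(2) show ?thesis by simp
  qed
  have roots: "poly b p1 = poly a p1 * pderiv p1" "poly c p1 = poly b p1 * pderiv p1"
    "poly b p2 = poly a p2 * pderiv p2" "poly c p2 = poly b p2 * pderiv p2"
    using tangency_cubic_at_root[of p1 p2 a b] tangency_cubic_at_root[of p1 p2 b c]
      tangency_cubic_at_root[of p2 p1 a b] tangency_cubic_at_root[of p2 p1 b c]
      alg[unfolded \<Gamma>_swap] alg distinct
    by auto
  have "a * c - b * b = [:0, A * Q, smult c2 A + smult a3 Q - L * L, [:a3 * c2:]:]"
    by (simp add: a b c \<open>B = 0\<close> \<open>C = 0\<close> algebra_simps)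
  note det = cubic_multiple_coeffs[OF _ _ this]
  from alg det distinct \<open>degree A \<le> 2\<close> \<open>degree L \<le> 1\<close> \<open>degree Q \<le> 2\<close>
    tangency_x[OF roots(1)] tangency_y[OF roots(2) distinct(1)]
    tangency_x[OF roots(3)] tangency_y[OF roots(4) distinct(2)]
  show ?thesis
    by (intro that; unfold_locales) (auto simp: ac_simps)
qed

theorem lemma5p6:
  fixes a b c \<Gamma> :: bpoly and p1 p2 :: "complex poly"
  assumes "algdop 2 a b c \<Gamma>"
    and "\<not> reducible_to_11 a b c \<Gamma>"
    and "\<Gamma> = [:0, 1:] * [:- p1, 1:] * [:- p2, 1:]"
  shows "finite {z. poly (p1 * p2) z = 0} \<and> card {z. poly (p1 * p2) z = 0} \<le> 2"
proof -
  obtain A L Q a3 c2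
    where sys12: "tangency_system A L Q p1 p2 a3 c2" and sys21: "tangency_system A L Q p2 p1 a3 c2"
    using algdop_2_cubic_tangency_system assms(1)[unfolded assms(3) cubic_linear_factors] by blast
  have "p1 * p2 \<noteq> 0"
    using tangency_system.p1_nonzero[OF sys12] tangency_system.p2_nonzero[OF sys12] by simp
  moreover have "card {z. poly p1 z = 0} \<le> 1" "card {z. poly p2 z = 0} \<le> 1"
    using tangency_system.card_roots_p1_le_1[OF sys12] tangency_system.card_roots_p1_le_1[OF sys21] .
  moreover have "{z. poly (p1 * p2) z = 0} = {z. poly p1 z = 0} \<union> {z. poly p2 z = 0}"
    by auto
  ultimately show ?thesis
    using poly_roots_finite card_Un_le[of "{z. poly p1 z = 0}" "{z. poly p2 z = 0}"] by fastforce
qed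

end
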